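(* Let $X_1,\dots,X_n$ be independent standard normal random variables and $a_1,\dots,a_n\in\mathbb{R}$, and $p\ge1$ an integer. Then $$\mathbb{E}\Big(\sum_{i=1}^n a_iX_i^2\Big)^p=\frac{p!}{2^p}\sum_{\lambda\vdash p}\Big(\prod_{k\in\lambda}\binom{2k}{k}\Big)m_\lambda(a_1,\dots,a_n),$$ where the sum is over all integer partitions $\lambda$ of $p$ and the product is over the parts $k$ of $\lambda$ (with multiplicity).
   Context: For a partition $\lambda$, $m_\lambda(a_1,\dots,a_n)$ is the monomial symmetric polynomial: the sum of all distinct monomials $a_{1}^{k_1}\cdots a_n^{k_n}$ whose multiset of nonzero exponents equals the multiset of parts of $\lambda$ (it is $0$ if $\lambda$ has more than $n$ parts). *)

theory Defs
  imports "HOL-Probability.Probability" "HOL-Library.Multiset"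
begin

definition int_partitions :: "nat \<Rightarrow> nat multiset set" where
  "int_partitions p = {lam. (\<forall>k\<in>#lam. 0 < k) \<and> sum_mset lam = p}"

definition monomial_sym :: "nat \<Rightarrow> (nat \<Rightarrow> real) \<Rightarrow> nat multiset \<Rightarrow> real" where
  "monomial_sym n a lam =
     (\<Sum>e\<in>{e :: nat \<Rightarrow> nat. (\<forall>i. n \<le> i \<longrightarrow> e i = 0) \<and>
            filter_mset (\<lambda>x. x \<noteq> 0) (image_mset e (mset_set {..<n})) = lam}.
        \<Prod>i<n. a i ^ e i)"

end

theory Submission
  imports Defs
begin

text \<open>Expand \<open>(\<Sum>i<n. Y\<^sub>i)\<^sup>p\<close> with \<open>Y\<^sub>i = a\<^sub>i X\<^sub>i\<^sup>2\<close> by the multinomial theorem; independence turns the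
  expectation of each monomial into \<open>\<Prod>i<n. E Y\<^sub>i\<^bsup>e\<^sub>i\<^esup>\<close>. For a standard normal \<open>X\<close>,
  \<open>E (a X\<^sup>2)\<^sup>m = a\<^sup>m (2m)! / (2\<^sup>m m!) = m!/2\<^sup>m \<cdot> binom(2m, m) \<cdot> a\<^sup>m\<close>, so the factorials cancel the
  multinomial coefficient \<open>p! / \<Prod> e\<^sub>i!\<close> and leave \<open>p!/2\<^sup>p \<Prod> binom(2e\<^sub>i, e\<^sub>i) a\<^sub>i\<^bsup>e\<^sub>i\<^esup>\<close>.
  Grouping the exponent vectors \<open>e\<close> by the partition formed by their nonzero entries
  produces the monomial symmetric polynomials.\<close>

definition weak_compositions :: "nat \<Rightarrow> nat \<Rightarrow> (nat \<Rightarrow> nat) set" where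
  "weak_compositions n p = {e. (\<forall>i. n \<le> i \<longrightarrow> e i = 0) \<and> (\<Sum>i<n. e i) = p}"

lemma finite_weak_compositions: "finite (weak_compositions n p)"
proof (rule finite_subset)
  have "e i \<le> p" if "e \<in> weak_compositions n p" "i < n" for e i
    using that member_le_sum[of i "{..<n}" e] by (simp add: weak_compositions_def)
  then show "weak_compositions n p \<subseteq> {e. \<forall>i. (i \<in> {..<n} \<longrightarrow> e i \<in> {..p}) \<and> (i \<notin> {..<n} \<longrightarrow> e i = 0)}"
    by (auto simp: weak_compositions_def)
  show "finite {e. \<forall>i. (i \<in> {..<n} \<longrightarrow> e i \<in> {..p}) \<and> (i \<notin> {..<n} \<longrightarrow> e i = (0::nat))}"
    by (rule finite_set_of_finite_funs) auto
qed

lemma weak_compositions_0: "weak_compositions 0 p = (if p = 0 then {\<lambda>_. 0} else {})"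
  by (auto simp: weak_compositions_def)

lemma sum_weak_compositions_Suc:
  "(\<Sum>e\<in>weak_compositions (Suc n) p. f e) =
   (\<Sum>k\<le>p. \<Sum>e\<in>weak_compositions n k. f (e(n := p - k)))"
proof -
  have "(\<Sum>k\<le>p. \<Sum>e\<in>weak_compositions n k. f (e(n := p - k))) =
        (\<Sum>(k, e)\<in>Sigma {..p} (weak_compositions n). f (e(n := p - k)))"
    by (rule sum.Sigma) (auto simp: finite_weak_compositions)
  also have "\<dots> = (\<Sum>e\<in>weak_compositions (Suc n) p. f e)"
  proof (rule sum.reindex_bij_witness[where i="\<lambda>e. (p - e n, e(n := 0))" and j="\<lambda>(k, e). e(n := p - k)"])
    fix ke assume "ke \<in> Sigma {..p} (weak_compositions n)"
    then obtain k e where ke: "ke = (k, e)" "k \<le> p"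
      and e0: "\<And>i. n \<le> i \<Longrightarrow> e i = 0" and sum_e: "(\<Sum>i<n. e i) = k"
      by (auto simp: weak_compositions_def)
    have "(\<Sum>i<n. (e(n := p - k)) i) = k"
      using sum_e by (intro trans[OF sum.cong sum_e]) auto
    then show "(\<lambda>(k, e). e(n := p - k)) ke \<in> weak_compositions (Suc n) p"
      using ke e0 by (auto simp: weak_compositions_def)
    show "(\<lambda>e. (p - e n, e(n := 0))) ((\<lambda>(k, e). e(n := p - k)) ke) = ke"
      using ke e0 by (auto simp: fun_eq_iff)
  next
    fix e assume "e \<in> weak_compositions (Suc n) p"
    then have e0: "\<And>i. Suc n \<le> i \<Longrightarrow> e i = 0" and sum_e: "(\<Sum>i<n. e i) + e n = p"
      by (auto simp: weak_compositions_def)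
    have "(\<Sum>i<n. (e(n := 0)) i) = (\<Sum>i<n. e i)"
      by (intro sum.cong) auto
    then show "(\<lambda>e. (p - e n, e(n := 0))) e \<in> Sigma {..p} (weak_compositions n)"
      using e0 sum_e by (auto simp: weak_compositions_def)
    show "(\<lambda>(k, e). e(n := p - k)) ((\<lambda>e. (p - e n, e(n := 0))) e) = e"
      using sum_e by (auto simp: fun_eq_iff)
  qed auto
  finally show ?thesis ..
qed

lemma prod_lessThan_Suc_fun_upd:
  "(\<Prod>i<Suc n. f i ((e(n := m)) i)) = (\<Prod>i<n. f i (e i)) * f n m"
proof -
  have "(\<Prod>i<n. f i ((e(n := m)) i)) = (\<Prod>i<n. f i (e i))"
    by (intro prod.cong) auto
  then show ?thesis
    by simp
qed

lemma binomial_mult_fact_div: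
  fixes F P Q :: real
  assumes "k \<le> p" "F \<noteq> 0"
  shows "real (p choose k) * (fact k / F * P * Q) = fact p / (F * fact (p - k)) * (P * Q)"
proof -
  have "fact k * fact (p - k) * real (p choose k) = fact p"
    using binomial_fact_lemma[OF assms(1)] by (metis of_nat_fact of_nat_mult)
  then show ?thesis
    using assms(2) by (simp add: field_simps)
qed

lemma (in prob_space) indep_var_lessThan_sum:
  fixes Y :: "nat \<Rightarrow> 'a \<Rightarrow> real"
  assumes "indep_vars (\<lambda>_. borel) Y {..<Suc n}"
  shows "indep_var borel (Y n) borel (\<lambda>\<omega>. \<Sum>i<n. Y i \<omega>)"
proof -
  have "indep_var
    borel ((\<lambda>f. f n) \<circ> (\<lambda>\<omega>. restrict (\<lambda>i. Y i \<omega>) {n}))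
    borel ((\<lambda>f. \<Sum>i<n. f i) \<circ> (\<lambda>\<omega>. restrict (\<lambda>i. Y i \<omega>) {..<n}))"
    by (intro indep_var_compose[OF indep_var_restrict[OF assms]]) auto
  also have "(\<lambda>f. f n) \<circ> (\<lambda>\<omega>. restrict (\<lambda>i. Y i \<omega>) {n}) = Y n"
    by auto
  also have "(\<lambda>f. \<Sum>i<n. f i) \<circ> (\<lambda>\<omega>. restrict (\<lambda>i. Y i \<omega>) {..<n}) = (\<lambda>\<omega>. \<Sum>i<n. Y i \<omega>)"
    by (auto simp: fun_eq_iff)
  finally show ?thesis .
qed

lemma (in prob_space) moment_sum_indep_vars:
  fixes Y :: "nat \<Rightarrow> 'a \<Rightarrow> real"
  assumes "indep_vars (\<lambda>_. borel) Y {..<n}"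
    and "\<And>i m. i < n \<Longrightarrow> integrable M (\<lambda>\<omega>. Y i \<omega> ^ m)"
  shows "integrable M (\<lambda>\<omega>. (\<Sum>i<n. Y i \<omega>) ^ p) \<and>
    expectation (\<lambda>\<omega>. (\<Sum>i<n. Y i \<omega>) ^ p) =
    (\<Sum>e\<in>weak_compositions n p.
       fact p / (\<Prod>i<n. fact (e i)) * (\<Prod>i<n. expectation (\<lambda>\<omega>. Y i \<omega> ^ e i)))"
  using assms
proof (induction n arbitrary: p)
  case 0
  then show ?case by (simp add: weak_compositions_0 prob_space)
next
  case (Suc n)
  define S where "S = (\<lambda>\<omega>. \<Sum>i<n. Y i \<omega>)"
  have IH: "integrable M (\<lambda>\<omega>. S \<omega> ^ k)"
    "expectation (\<lambda>\<omega>. S \<omega> ^ k) = (\<Sum>e\<in>weak_compositions n k.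
       fact k / (\<Prod>i<n. fact (e i)) * (\<Prod>i<n. expectation (\<lambda>\<omega>. Y i \<omega> ^ e i)))" for k
    using Suc.IH[OF indep_vars_subset[OF Suc.prems(1)]] Suc.prems(2) unfolding S_def by auto
  have int_Y: "integrable M (\<lambda>\<omega>. Y n \<omega> ^ m)" for m
    using Suc.prems(2) by simp
  have indep: "indep_var borel (\<lambda>\<omega>. Y n \<omega> ^ m) borel (\<lambda>\<omega>. S \<omega> ^ k)" for k m
    using indep_var_compose[OF indep_var_lessThan_sum[OF Suc.prems(1)], of "\<lambda>x. x ^ m" borel "\<lambda>s. s ^ k" borel]
    by (simp add: comp_def S_def)
  have int_SY: "integrable M (\<lambda>\<omega>. S \<omega> ^ k * Y n \<omega> ^ m)" for k m
    using indep_var_integrable[OF indep int_Y IH(1)] by (simp add: mult.commute)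
  have E_SY: "expectation (\<lambda>\<omega>. S \<omega> ^ k * Y n \<omega> ^ m) =
      expectation (\<lambda>\<omega>. S \<omega> ^ k) * expectation (\<lambda>\<omega>. Y n \<omega> ^ m)" for k m
    using indep_var_lebesgue_integral[OF indep int_Y IH(1)] by (simp add: mult.commute)
  have binomial: "(\<Sum>i<Suc n. Y i \<omega>) ^ p = (\<Sum>k\<le>p. real (p choose k) * (S \<omega> ^ k * Y n \<omega> ^ (p - k)))" for \<omega>
    by (simp add: S_def binomial_ring mult.assoc)
  have "expectation (\<lambda>\<omega>. (\<Sum>i<Suc n. Y i \<omega>) ^ p) =
      (\<Sum>k\<le>p. real (p choose k) * (expectation (\<lambda>\<omega>. S \<omega> ^ k) * expectation (\<lambda>\<omega>. Y n \<omega> ^ (p - k))))"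
    unfolding binomial using int_SY by (simp add: E_SY)
  also have "\<dots> = (\<Sum>k\<le>p. \<Sum>e\<in>weak_compositions n k.
      fact p / ((\<Prod>i<n. fact (e i)) * fact (p - k)) *
      ((\<Prod>i<n. expectation (\<lambda>\<omega>. Y i \<omega> ^ e i)) * expectation (\<lambda>\<omega>. Y n \<omega> ^ (p - k))))"
  proof (intro sum.cong refl)
    fix k assume "k \<in> {..p}"
    then show "real (p choose k) * (expectation (\<lambda>\<omega>. S \<omega> ^ k) * expectation (\<lambda>\<omega>. Y n \<omega> ^ (p - k))) =
      (\<Sum>e\<in>weak_compositions n k. fact p / ((\<Prod>i<n. fact (e i)) * fact (p - k)) *
        ((\<Prod>i<n. expectation (\<lambda>\<omega>. Y i \<omega> ^ e i)) * expectation (\<lambda>\<omega>. Y n \<omega> ^ (p - k))))"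
      unfolding IH(2) sum_distrib_right sum_distrib_left
      by (intro sum.cong refl binomial_mult_fact_div) auto
  qed
  also have "\<dots> = (\<Sum>e\<in>weak_compositions (Suc n) p.
       fact p / (\<Prod>i<Suc n. fact (e i)) * (\<Prod>i<Suc n. expectation (\<lambda>\<omega>. Y i \<omega> ^ e i)))"
    by (simp add: sum_weak_compositions_Suc prod_lessThan_Suc_fun_upd[where f="\<lambda>_ m. fact m"]
        prod_lessThan_Suc_fun_upd[where f="\<lambda>i m. expectation (\<lambda>\<omega>. Y i \<omega> ^ m)"])
  finally show ?case
    unfolding binomial using int_SY by auto
qed

lemma (in prob_space) square_std_normal_moment:
  fixes X :: "'a \<Rightarrow> real"
  assumes "distributed M lborel X std_normal_density"
  shows "integrable M (\<lambda>\<omega>. (c * (X \<omega>)\<^sup>2) ^ m)"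
    and "expectation (\<lambda>\<omega>. (c * (X \<omega>)\<^sup>2) ^ m) = fact m / 2 ^ m * (real ((2 * m) choose m) * c ^ m)"
proof -
  have power: "(c * x\<^sup>2) ^ m = c ^ m * x ^ (2 * m)" for x :: real
    by (simp add: power_mult_distrib power_mult)
  have density_nonneg: "0 \<le> std_normal_density x" for x
    by (simp add: normal_density_nonneg)
  have "integrable lborel (\<lambda>x. std_normal_density x * (c * x\<^sup>2) ^ m)"
    unfolding power using integrable_std_normal_moment[of "2 * m"]
    by (simp add: mult.left_commute[of _ "c ^ m"])
  then show "integrable M (\<lambda>\<omega>. (c * (X \<omega>)\<^sup>2) ^ m)"
    using distributed_integrable[OF assms, of "\<lambda>x. (c * x\<^sup>2) ^ m"] density_nonneg by simp
  have "expectation (\<lambda>\<omega>. (c * (X \<omega>)\<^sup>2) ^ m) = integral\<^sup>L lborel (\<lambda>x. std_normal_density x * (c * x\<^sup>2) ^ m)"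
    using distributed_integral[OF assms, of "\<lambda>x. (c * x\<^sup>2) ^ m"] density_nonneg by simp
  also have "\<dots> = c ^ m * (fact (2 * m) / (2 ^ m * fact m))"
    unfolding power by (simp add: mult.left_commute[of _ "c ^ m"] integral_std_normal_moment_even)
  also have "\<dots> = fact m / 2 ^ m * (real ((2 * m) choose m) * c ^ m)"
  proof -
    have "fact m * fact m * ((2 * m) choose m) = fact (2 * m)"
      using binomial_fact_lemma[of m "2 * m"] by simp
    then have "fact m * fact m * real ((2 * m) choose m) = fact (2 * m)"
      by (metis of_nat_fact of_nat_mult)
    then show ?thesis
      by (simp add: field_simps)
  qed
  finally show "expectation (\<lambda>\<omega>. (c * (X \<omega>)\<^sup>2) ^ m) = fact m / 2 ^ m * (real ((2 * m) choose m) * c ^ m)" .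
qed

lemma multinomial_coefficient_cancel:
  fixes w :: "nat \<Rightarrow> real"
  assumes "(\<Sum>i<n. e i) = p"
  shows "fact p / (\<Prod>i<n. fact (e i)) * (\<Prod>i<n. fact (e i) / 2 ^ e i * w i) = fact p / 2 ^ p * (\<Prod>i<n. w i)"
proof -
  have "(\<Prod>i<n. fact (e i) / 2 ^ e i * w i) = (\<Prod>i<n. fact (e i)) / 2 ^ p * (\<Prod>i<n. w i)"
    unfolding assms[symmetric] power_sum by (simp add: prod.distrib prod_dividef)
  moreover have "(\<Prod>i<n. fact (e i) :: real) \<noteq> 0"
    by simp
  ultimately show ?thesis
    by simp
qed

definition nonzero_exponents :: "nat \<Rightarrow> (nat \<Rightarrow> nat) \<Rightarrow> nat multiset" where
  "nonzero_exponents n e = filter_mset (\<lambda>k. k \<noteq> 0) (image_mset e (mset_set {..<n}))"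

lemma sum_mset_nonzero_exponents: "sum_mset (nonzero_exponents n e) = (\<Sum>i<n. e i)"
proof -
  have "sum_mset (filter_mset (\<lambda>k. k \<noteq> 0) K) = sum_mset K" for K :: "nat multiset"
    by (induction K) auto
  then show ?thesis
    by (simp add: nonzero_exponents_def sum_unfold_sum_mset)
qed

lemma prod_mset_nonzero_exponents:
  fixes c :: "nat \<Rightarrow> 'b::comm_monoid_mult"
  assumes "c 0 = 1"
  shows "(\<Prod>k\<in>#nonzero_exponents n e. c k) = (\<Prod>i<n. c (e i))"
proof -
  have "(\<Prod>k\<in>#filter_mset (\<lambda>k. k \<noteq> 0) K. c k) = (\<Prod>k\<in>#K. c k)" for K
    using assms by (induction K) auto
  then show ?thesis
    by (simp add: nonzero_exponents_def prod_unfold_prod_mset multiset.map_comp comp_def)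
qed

lemma nonzero_exponents_in_int_partitions:
  "e \<in> weak_compositions n p \<Longrightarrow> nonzero_exponents n e \<in> int_partitions p"
  by (auto simp: int_partitions_def weak_compositions_def sum_mset_nonzero_exponents)
    (auto simp: nonzero_exponents_def)

lemma finite_int_partitions: "finite (int_partitions p)"
proof (rule finite_subset)
  have "size K \<le> sum_mset K" if "\<forall>k\<in>#K. 0 < k" for K :: "nat multiset"
    using that by (induction K) auto
  moreover have "k \<le> sum_mset K" if "k \<in># K" for k and K :: "nat multiset"
    using that by (induction K) auto
  ultimately show "int_partitions p \<subseteq> (\<Union>s\<in>{..p}. multisets_of_size {..p} s)"
    by (fastforce simp: int_partitions_def multisets_of_size_def)
qed auto

lemma monomial_sym_eq_sum_weak_compositions:
  assumes "lam \<in> int_partitions p"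
  shows "monomial_sym n a lam =
    (\<Sum>e\<in>{e \<in> weak_compositions n p. nonzero_exponents n e = lam}. \<Prod>i<n. a i ^ e i)"
proof -
  have "sum_mset lam = p"
    using assms by (simp add: int_partitions_def)
  then show ?thesis
    unfolding monomial_sym_def nonzero_exponents_def[symmetric]
    by (intro sum.cong refl) (auto simp: weak_compositions_def simp flip: sum_mset_nonzero_exponents)
qed

lemma sum_weak_compositions_eq_sum_monomial_sym:
  fixes c :: "nat \<Rightarrow> real"
  assumes "c 0 = 1"
  shows "(\<Sum>e\<in>weak_compositions n p. \<Prod>i<n. c (e i) * a i ^ e i) =
    (\<Sum>lam\<in>int_partitions p. (\<Prod>k\<in>#lam. c k) * monomial_sym n a lam)"
proof -
  have "(\<Sum>e\<in>weak_compositions n p. \<Prod>i<n. c (e i) * a i ^ e i) =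
    (\<Sum>lam\<in>int_partitions p. \<Sum>e\<in>{e \<in> weak_compositions n p. nonzero_exponents n e = lam}.
       \<Prod>i<n. c (e i) * a i ^ e i)"
    by (rule sum.group[symmetric])
      (auto simp: finite_weak_compositions finite_int_partitions nonzero_exponents_in_int_partitions)
  also have "\<dots> = (\<Sum>lam\<in>int_partitions p. (\<Prod>k\<in>#lam. c k) * monomial_sym n a lam)"
  proof (intro sum.cong refl)
    fix lam assume "lam \<in> int_partitions p"
    have "(\<Sum>e\<in>{e \<in> weak_compositions n p. nonzero_exponents n e = lam}. \<Prod>i<n. c (e i) * a i ^ e i) =
      (\<Sum>e\<in>{e \<in> weak_compositions n p. nonzero_exponents n e = lam}. (\<Prod>k\<in>#lam. c k) * (\<Prod>i<n. a i ^ e i))"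
      by (intro sum.cong refl) (simp add: prod.distrib flip: prod_mset_nonzero_exponents[where c = c, OF assms])
    then show "(\<Sum>e\<in>{e \<in> weak_compositions n p. nonzero_exponents n e = lam}. \<Prod>i<n. c (e i) * a i ^ e i) =
      (\<Prod>k\<in>#lam. c k) * monomial_sym n a lam"
      using \<open>lam \<in> int_partitions p\<close> by (simp add: monomial_sym_eq_sum_weak_compositions sum_distrib_left)
  qed
  finally show ?thesis .
qed

theorem lemma4p1:
  fixes M :: "'a measure" and X :: "nat \<Rightarrow> 'a \<Rightarrow> real" and a :: "nat \<Rightarrow> real"
    and n p :: nat
  assumes "prob_space M"
    and "prob_space.indep_vars M (\<lambda>_. borel) X {..<n}"
    and "\<And>i. i < n \<Longrightarrow> distributed M lborel (X i) std_normal_density"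
    and "1 \<le> p"
  shows "integral\<^sup>L M (\<lambda>\<omega>. (\<Sum>i<n. a i * (X i \<omega>)\<^sup>2) ^ p) =
         fact p / 2 ^ p *
         (\<Sum>lam\<in>int_partitions p.
            (\<Prod>k\<in>#lam. real ((2 * k) choose k)) * monomial_sym n a lam)"
proof -
  interpret prob_space M
    by (rule assms(1))
  have indep: "indep_vars (\<lambda>_. borel) (\<lambda>i \<omega>. a i * (X i \<omega>)\<^sup>2) {..<n}"
    by (rule indep_vars_compose2[OF assms(2)]) simp
  note moments = square_std_normal_moment[OF assms(3)]
  have moment_prod: "(\<Prod>i<n. expectation (\<lambda>\<omega>. (a i * (X i \<omega>)\<^sup>2) ^ e i)) =
      (\<Prod>i<n. fact (e i) / 2 ^ e i * (real ((2 * e i) choose e i) * a i ^ e i))" for e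
    by (intro prod.cong refl) (simp add: moments(2))
  have "expectation (\<lambda>\<omega>. (\<Sum>i<n. a i * (X i \<omega>)\<^sup>2) ^ p) =
    (\<Sum>e\<in>weak_compositions n p. fact p / (\<Prod>i<n. fact (e i)) *
       (\<Prod>i<n. expectation (\<lambda>\<omega>. (a i * (X i \<omega>)\<^sup>2) ^ e i)))"
    using moment_sum_indep_vars[OF indep moments(1)] by blast
  also have "\<dots> = (\<Sum>e\<in>weak_compositions n p. fact p / (\<Prod>i<n. fact (e i)) *
       (\<Prod>i<n. fact (e i) / 2 ^ e i * (real ((2 * e i) choose e i) * a i ^ e i)))"
    by (simp only: moment_prod)
  also have "\<dots> = (\<Sum>e\<in>weak_compositions n p.
       fact p / 2 ^ p * (\<Prod>i<n. real ((2 * e i) choose e i) * a i ^ e i))"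
    by (intro sum.cong refl multinomial_coefficient_cancel) (simp add: weak_compositions_def)
  also have "\<dots> = fact p / 2 ^ p *
      (\<Sum>lam\<in>int_partitions p. (\<Prod>k\<in>#lam. real ((2 * k) choose k)) * monomial_sym n a lam)"
    unfolding sum_distrib_left[symmetric]
    by (simp add: sum_weak_compositions_eq_sum_monomial_sym[where c = "\<lambda>k. real ((2 * k) choose k)"])
  finally show ?thesis .
qed

end
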